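(* Let $\mathcal{G}$ be the information-flow graph of a single-sender single-uniprior index-coding instance with message lengths $q_1,\dots,q_n$. Then \[ \ell^*(\mathcal{G}) \geq \sum_{i:\ i \text{ is a predecessor of some vertex in } \mathcal{L}(\mathcal{G})} q_i . \]
   Context: Single-sender single-uniprior index coding: there are $n$ receivers and $n$ independent messages $x_1,\dots,x_n$; message $x_i$ consists of $q_i\ge 1$ bits, each independently uniformly distributed on $\{0,1\}$. A single sender knows all messages. Receiver $i$ knows $x_i$ a priori and requests a set $\mathcal{W}_i$ of messages with $x_i\notin\mathcal{W}_i$. The information-flow graph is the directed graph $\mathcal{G}=(\mathcal{V},\mathcal{A})$ with $\mathcal{V}=\{1,\dots,n\}$ and an arc $(j\to i)\in\mathcal{A}$ iff $x_j\in\mathcal{W}_i$. An index code of length $\ell$ consists of an encoding function $E:\{0,1\}^{\sum_i q_i}\to\{0,1\}^\ell$ and, for each receiver $i$, a decoding function $D_i$ such that $D_i(E(x_1,\dots,x_n),x_i)$ equals the tuple of messages in $\mathcal{W}_i$ for all values of the messages. $\ell^*(\mathcal{G})$ denotes the minimum length of an index code. A leaf vertex is a vertex with no outgoing arcs; $\mathcal{L}(\mathcal{G})$ is the set of leaf vertices. A vertex $j$ is a predecessor of vertex $i$ iff there is a directed path in $\mathcal{G}$ from $j$ to $i$. *)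

theory Defs
  imports Main
begin

text \<open>An instance is given by its information-flow graph, an arc set A over {1..n}:
  (j,i) in A iff receiver i requests message x_j.\<close>

definition info_flow_graph :: "nat \<Rightarrow> (nat \<times> nat) set \<Rightarrow> bool" where
  "info_flow_graph n A \<longleftrightarrow> A \<subseteq> {1..n} \<times> {1..n} \<and> (\<forall>i. (i, i) \<notin> A)"

definition requests :: "(nat \<times> nat) set \<Rightarrow> nat \<Rightarrow> nat set" where
  "requests A i = {j. (j, i) \<in> A}"

definition messages :: "nat \<Rightarrow> (nat \<Rightarrow> nat) \<Rightarrow> (nat \<Rightarrow> bool list) set" where
  "messages n q = {x. (\<forall>i\<in>{1..n}. length (x i) = q i) \<and> (\<forall>i. i \<notin> {1..n} \<longrightarrow> x i = [])}"

text \<open>E is an encoding function of length l; D i is the decoder of receiver i, which,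
  from the codeword and its own message x_i, outputs the tuple of requested messages.\<close>
definition is_index_code ::
  "nat \<Rightarrow> (nat \<Rightarrow> nat) \<Rightarrow> (nat \<times> nat) set \<Rightarrow> nat \<Rightarrow>
   ((nat \<Rightarrow> bool list) \<Rightarrow> bool list) \<Rightarrow> (nat \<Rightarrow> bool list \<Rightarrow> bool list \<Rightarrow> nat \<Rightarrow> bool list) \<Rightarrow> bool" where
  "is_index_code n q A l E D \<longleftrightarrow>
     (\<forall>x\<in>messages n q. length (E x) = l \<and>
        (\<forall>i\<in>{1..n}. \<forall>j\<in>requests A i. D i (E x) (x i) j = x j))"

definition opt_length :: "nat \<Rightarrow> (nat \<Rightarrow> nat) \<Rightarrow> (nat \<times> nat) set \<Rightarrow> nat" where
  "opt_length n q A = (LEAST l. \<exists>E D. is_index_code n q A l E D)"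

definition leaves :: "nat \<Rightarrow> (nat \<times> nat) set \<Rightarrow> nat set" where
  "leaves n A = {i\<in>{1..n}. \<forall>j. (i, j) \<notin> A}"

definition is_predecessor :: "(nat \<times> nat) set \<Rightarrow> nat \<Rightarrow> nat \<Rightarrow> bool" where
  "is_predecessor A j i \<longleftrightarrow> (j, i) \<in> A\<^sup>+"

end

theory Submission
  imports Defs "HOL-Library.FuncSet"
begin

text \<open>A leaf requests nothing, and any receiver decodes the messages it requests
  from the codeword and its own message. Hence, once the messages outside the set \<open>P\<close> of
  predecessors of leaves are fixed (in particular those at the leaves), the codeword
  determines the messages at all of \<open>P\<close> by walking backwards along paths into the leaves.
  So the encoder is injective on \<open>2 ^ (\<Sum>i\<in>P. q i)\<close> message tuples, which forces
  \<open>2 ^ (\<Sum>i\<in>P. q i) \<le> 2 ^ \<ell>\<close>.\<close>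

lemma card_bool_lists_length: "card {xs::bool list. length xs = m} = 2 ^ m"
  using card_lists_length_eq[of "UNIV :: bool set" m] by simp

lemma finite_bool_lists_length: "finite {xs::bool list. length xs = m}"
  using finite_lists_length_eq[of "UNIV :: bool set" m] by simp

lemma card_PiE_bool_lists:
  assumes "finite P"
  shows "card (\<Pi>\<^sub>E k\<in>P. {xs::bool list. length xs = q k}) = 2 ^ sum q P"
  by (simp add: card_PiE[OF assms] card_bool_lists_length power_sum)

lemma index_code_exists: "\<exists>l E D. is_index_code n q A l E D"
proof -
  define E where "E = (\<lambda>x::nat \<Rightarrow> bool list. concat (map x [1..<n+1]))"
  define D where "D = (\<lambda>(i::nat) c (xi::bool list) j. inv_into (messages n q) E c j)"
  have length_E: "length (E x) = sum_list (map q [1..<n+1])" if "x \<in> messages n q" for x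
  proof -
    have "map length (map x [1..<n+1]) = map q [1..<n+1]"
      using that by (auto simp: messages_def)
    then show ?thesis
      unfolding E_def length_concat by (simp only:)
  qed
  have "inj_on E (messages n q)"
  proof (rule inj_onI)
    fix x y assume x: "x \<in> messages n q" and y: "y \<in> messages n q" and "E x = E y"
    have "zip (map x [1..<n+1]) (map y [1..<n+1]) = map (\<lambda>k. (x k, y k)) [1..<n+1]"
      by (simp add: zip_map_map zip_same_conv_map)
    then have "\<forall>(a, b) \<in> set (zip (map x [1..<n+1]) (map y [1..<n+1])). length a = length b"
      using x y by (auto simp: messages_def)
    then have "map x [1..<n+1] = map y [1..<n+1]"
      using \<open>E x = E y\<close> unfolding E_def by (subst (asm) concat_eq_concat_iff) auto
    then have "\<forall>i\<in>{1..n}. x i = y i" by auto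
    then show "x = y"
      using x y by (auto simp: messages_def fun_eq_iff)
  qed
  then have "is_index_code n q A (sum_list (map q [1..<n+1])) E D"
    unfolding is_index_code_def D_def using length_E by auto
  then show ?thesis by blast
qed

lemma opt_length_is_index_code: "\<exists>E D. is_index_code n q A (opt_length n q A) E D"
  unfolding opt_length_def by (rule LeastI_ex) (use index_code_exists in blast)

lemma index_code_decodes_along_path:
  assumes code: "is_index_code n q A l E D"
    and graph: "A \<subseteq> {1..n} \<times> {1..n}"
    and x: "x \<in> messages n q" and y: "y \<in> messages n q" and same_code: "E x = E y"
    and path: "(a, b) \<in> A\<^sup>+" and agree: "x b = y b"
  shows "x a = y a"
proof -
  have decode_arc: "x a' = y a'" if arc: "(a', b') \<in> A" and "x b' = y b'" for a' b'
  proof -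
    have "b' \<in> {1..n}" and "a' \<in> requests A b'"
      using arc graph by (auto simp: requests_def)
    then have "D b' (E x) (x b') a' = x a'" and "D b' (E y) (y b') a' = y a'"
      using code x y unfolding is_index_code_def by blast+
    then show ?thesis
      using same_code \<open>x b' = y b'\<close> by simp
  qed
  from path agree show ?thesis
    by (induction rule: converse_trancl_induct) (use decode_arc in blast)+
qed

lemma leaf_not_predecessor: "l \<in> leaves n A \<Longrightarrow> \<not> is_predecessor A l m"
  unfolding leaves_def is_predecessor_def by (auto dest: tranclD)

lemma index_code_length_ge:
  assumes code: "is_index_code n q A l E D" and P: "P \<subseteq> {1..n}"
    and determined: "\<And>x y. \<lbrakk>x \<in> messages n q; y \<in> messages n q; E x = E y;
                             \<forall>k. k \<notin> P \<longrightarrow> x k = y k\<rbrakk> \<Longrightarrow> x = y"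
  shows "sum q P \<le> l"
proof -
  define pad where "pad k = (if k \<in> {1..n} then replicate (q k) False else [])" for k
  define embed where "embed h k = (if k \<in> P then h k else pad k)" for h k
  define S where "S = (\<Pi>\<^sub>E k\<in>P. {xs::bool list. length xs = q k})"
  have finite_P: "finite P" using P finite_subset by blast
  have embed_messages: "embed h \<in> messages n q" if "h \<in> S" for h
    using that P unfolding messages_def embed_def pad_def S_def by (auto simp: PiE_def Pi_def)
  have "inj_on embed S"
  proof (rule inj_onI)
    fix h h' assume "h \<in> S" "h' \<in> S" "embed h = embed h'"
    then show "h = h'"
      unfolding S_def embed_def by (auto simp: fun_eq_iff PiE_def extensional_def) metis
  qed
  moreover have "inj_on E (embed ` S)"
    by (rule inj_onI) (auto intro: determined embed_messages simp: embed_def)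
  ultimately have "inj_on (E \<circ> embed) S"
    by (rule comp_inj_on)
  moreover have "(E \<circ> embed) ` S \<subseteq> {xs. length xs = l}"
    using embed_messages code unfolding is_index_code_def by auto
  ultimately have "card S \<le> card {xs::bool list. length xs = l}"
    using card_inj_on_le finite_bool_lists_length by blast
  then have "(2::nat) ^ sum q P \<le> 2 ^ l"
    unfolding S_def card_PiE_bool_lists[OF finite_P] card_bool_lists_length .
  then show ?thesis by simp
qed

theorem lemma3:
  fixes n :: nat and q :: "nat \<Rightarrow> nat" and A :: "(nat \<times> nat) set"
  assumes "info_flow_graph n A"
    and "\<forall>i\<in>{1..n}. q i \<ge> 1"
  shows "opt_length n q A \<ge>
           (\<Sum>i\<in>{i\<in>{1..n}. \<exists>l\<in>leaves n A. is_predecessor A i l}. q i)"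
proof -
  define P where "P = {i\<in>{1..n}. \<exists>l\<in>leaves n A. is_predecessor A i l}"
  have graph: "A \<subseteq> {1..n} \<times> {1..n}"
    using assms(1) by (simp add: info_flow_graph_def)
  obtain E D where code: "is_index_code n q A (opt_length n q A) E D"
    using opt_length_is_index_code by blast
  have "sum q P \<le> opt_length n q A"
  proof (rule index_code_length_ge[OF code])
    show "P \<subseteq> {1..n}" unfolding P_def by auto
    fix x y assume x: "x \<in> messages n q" and y: "y \<in> messages n q" and "E x = E y"
      and outside: "\<forall>k. k \<notin> P \<longrightarrow> x k = y k"
    have "x k = y k" if "k \<in> P" for k
    proof -
      obtain l where "l \<in> leaves n A" and "(k, l) \<in> A\<^sup>+"
        using \<open>k \<in> P\<close> unfolding P_def is_predecessor_def by auto
      moreover from \<open>l \<in> leaves n A\<close> have "l \<notin> P"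
        unfolding P_def using leaf_not_predecessor by blast
      ultimately show ?thesis
        using index_code_decodes_along_path[OF code graph x y \<open>E x = E y\<close>] outside by blast
    qed
    with outside show "x = y" by blast
  qed
  then show ?thesis unfolding P_def .
qed

end
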